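(* Let $k\ge1$. The generating function $\sum_{n\ge0}d_k(n)q^n$, where $d_k(n)=\sum_{\lambda\vdash n}\#\{s: h_{s,1}(\lambda)=k\}$ is the total number of first-column hooks of length $k$ over all partitions of $n$, equals $$\frac{q^k}{(q^k;q)_\infty}\sum_{l=1}^k\frac{1}{(q;q)_{k-l}} .$$
   Context: A partition $\lambda=(\lambda_1\ge\cdots\ge\lambda_t>0)$ has first-column hook lengths $h_{s,1}(\lambda)=\lambda_s+(t-s)$, $1\le s\le t$. Notation: $(a;q)_\infty=\prod_{j\ge0}(1-aq^j)$, $(q;q)_m=\prod_{j=1}^m(1-q^j)$. *)

theory Defs
  imports "HOL-Analysis.Analysis"
begin

definition partitions :: "nat \<Rightarrow> nat list set" where
  "partitions n = {xs. sorted_wrt (\<ge>) xs \<and> (\<forall>x\<in>set xs. 0 < x) \<and> sum_list xs = n}"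

text \<open>First-column hook length h_{s+1,1} = lambda_{s+1} + (t - (s+1)), with 0-based index s.\<close>
definition fc_hook :: "nat list \<Rightarrow> nat \<Rightarrow> nat" where
  "fc_hook xs s = xs ! s + (length xs - Suc s)"

definition d_count :: "nat \<Rightarrow> nat \<Rightarrow> nat" where
  "d_count k n = (\<Sum>xs\<in>partitions n. card {s. s < length xs \<and> fc_hook xs s = k})"

definition qpoch_inf :: "complex \<Rightarrow> complex \<Rightarrow> complex" where
  "qpoch_inf a q = (\<Prod>j. 1 - a * q ^ j)"

definition qpoch_fin :: "complex \<Rightarrow> nat \<Rightarrow> complex" where
  "qpoch_fin q m = (\<Prod>j=1..m. 1 - q ^ j)"

end

(*
  Removing the last (smallest) part a of a partition lowers every other first-column hook
  by one, while the last row itself has hook length a. Hence the generating function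
  F_k(m) of first-column hooks of length k over partitions with all parts at least m
  satisfies F_k(m) = q^k/(q^k;q)_inf + sum_{a=m}^{k-1} q^a F_{k-1}(a). This recursion is
  solved by F_k(m) = q^k/(q;q)_inf * c_k(m) with the polynomial
  c_k(m) = hook_poly q k m = sum_r q^((m-1) r) [k-m choose r]_q (q;q)_{k-1-r},
  and for m = 1 the Gaussian binomials cancel:
  [k-1 choose r]_q (q;q)_{k-1-r} = (q;q)_{k-1}/(q;q)_r.
*)

theory Submission
  imports Defs
begin

definition partitions_ge :: "nat \<Rightarrow> nat \<Rightarrow> nat list set" where
  "partitions_ge m n = {xs \<in> partitions n. \<forall>x\<in>set xs. m \<le> x}"

definition num_partitions_ge :: "nat \<Rightarrow> nat \<Rightarrow> nat" where
  "num_partitions_ge m n = card (partitions_ge m n)"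

definition hook_count :: "nat \<Rightarrow> nat list \<Rightarrow> nat" where
  "hook_count k xs = card {s. s < length xs \<and> fc_hook xs s = k}"

definition hook_total :: "nat \<Rightarrow> nat \<Rightarrow> nat \<Rightarrow> nat" where
  "hook_total k m n = (\<Sum>xs\<in>partitions_ge m n. hook_count k xs)"

lemma length_le_sum_list: "\<forall>x\<in>set xs. 0 < (x::nat) \<Longrightarrow> length xs \<le> sum_list xs"
  by (induction xs) auto

lemma finite_partitions: "finite (partitions n)"
proof (rule finite_subset)
  show "partitions n \<subseteq> {xs. set xs \<subseteq> {0..n} \<and> length xs \<le> n}"
    unfolding partitions_def using length_le_sum_list member_le_sum_list by fastforce
qed (intro finite_lists_length_le, simp)

lemma partitions_ge_subset: "partitions_ge m n \<subseteq> partitions n"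
  unfolding partitions_ge_def by auto

lemma finite_partitions_ge: "finite (partitions_ge m n)"
  using finite_subset[OF partitions_ge_subset finite_partitions] .

lemma partitions_ge_1: "partitions_ge 1 n = partitions n"
  unfolding partitions_ge_def partitions_def by auto

lemma partitions_ge_0: "partitions_ge m 0 = {[]}"
  unfolding partitions_ge_def partitions_def
  by (auto simp: sum_list_eq_0_iff) (metis neq_Nil_conv list.set_intros(1) less_irrefl)

lemma partitions_ge_nonempty_list: "xs \<in> partitions_ge m n \<Longrightarrow> 0 < n \<Longrightarrow> xs \<noteq> []"
  unfolding partitions_ge_def partitions_def by auto

lemma snoc_in_partitions_ge_iff:
  "1 \<le> m \<Longrightarrow> ys @ [a] \<in> partitions_ge m n \<longleftrightarrow> m \<le> a \<and> a \<le> n \<and> ys \<in> partitions_ge a (n - a)"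
  unfolding partitions_ge_def partitions_def by (auto simp: sorted_wrt_append)

lemma sum_partitions_ge_by_last:
  assumes "1 \<le> m" "0 < n"
  shows "(\<Sum>xs\<in>partitions_ge m n. \<phi> xs) = (\<Sum>a=m..n. \<Sum>ys\<in>partitions_ge a (n - a). \<phi> (ys @ [a]))"
proof -
  have snoc: "butlast xs @ [last xs] = xs" if "xs \<in> partitions_ge m n" for xs
    using partitions_ge_nonempty_list[OF that assms(2)] by simp
  have "(\<Sum>xs\<in>partitions_ge m n. \<phi> xs) = (\<Sum>(a, ys)\<in>(SIGMA a:{m..n}. partitions_ge a (n - a)). \<phi> (ys @ [a]))"
  proof (rule sum.reindex_bij_witness[of _ "\<lambda>(a, ys). ys @ [a]" "\<lambda>xs. (last xs, butlast xs)"])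
    fix xs assume xs: "xs \<in> partitions_ge m n"
    show "(last xs, butlast xs) \<in> (SIGMA a:{m..n}. partitions_ge a (n - a))"
      using xs snoc[OF xs] snoc_in_partitions_ge_iff[OF assms(1), of "butlast xs" "last xs" n] by auto
  qed (use snoc snoc_in_partitions_ge_iff[OF assms(1)] in auto)
  also have "\<dots> = (\<Sum>a=m..n. \<Sum>ys\<in>partitions_ge a (n - a). \<phi> (ys @ [a]))"
    by (rule sum.Sigma[symmetric]) (auto simp: finite_partitions_ge)
  finally show ?thesis .
qed

lemma num_partitions_ge_0: "num_partitions_ge m 0 = 1"
  unfolding num_partitions_ge_def partitions_ge_0 by simp

lemma num_partitions_ge_eq_0:
  assumes "0 < n" "n < m"
  shows "num_partitions_ge m n = 0"
proof -
  have "xs \<notin> partitions_ge m n" for xs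
  proof
    assume xs: "xs \<in> partitions_ge m n"
    then have "last xs \<in> set xs"
      using partitions_ge_nonempty_list assms(1) by simp
    with xs have "m \<le> last xs" "last xs \<le> n"
      unfolding partitions_ge_def partitions_def by (auto simp: member_le_sum_list)
    with assms(2) show False by simp
  qed
  then have "partitions_ge m n = {}" by blast
  then show ?thesis by (simp add: num_partitions_ge_def)
qed

lemma num_partitions_ge_le: "num_partitions_ge m n \<le> card (partitions n)"
  unfolding num_partitions_ge_def by (rule card_mono[OF finite_partitions partitions_ge_subset])

lemma num_partitions_ge_by_last:
  "1 \<le> m \<Longrightarrow> 0 < n \<Longrightarrow> num_partitions_ge m n = (\<Sum>a=m..n. num_partitions_ge a (n - a))"
  using sum_partitions_ge_by_last[of m n "\<lambda>_. 1::nat"] by (simp add: num_partitions_ge_def)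

lemma num_partitions_ge_rec:
  assumes "1 \<le> m"
  shows "num_partitions_ge m n = num_partitions_ge (Suc m) n + (if m \<le> n then num_partitions_ge m (n - m) else 0)"
proof (cases "0 < n \<and> m \<le> n")
  case True
  then show ?thesis
    using assms num_partitions_ge_by_last[of m n] num_partitions_ge_by_last[of "Suc m" n]
    by (simp add: sum.atLeast_Suc_atMost)
next
  case False
  then show ?thesis
    using assms num_partitions_ge_eq_0[of n m] num_partitions_ge_eq_0[of n "Suc m"]
    by (cases "n = 0") (auto simp: num_partitions_ge_0)
qed

lemma hook_count_snoc:
  assumes "1 \<le> k"
  shows "hook_count k (ys @ [a]) = (if a = k then 1 else 0) + hook_count (k - 1) ys"
proof -
  have "{s. s < length (ys @ [a]) \<and> fc_hook (ys @ [a]) s = k} =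
        {s. s < length ys \<and> fc_hook ys s = k - 1} \<union> (if a = k then {length ys} else {})"
    using assms by (auto simp: fc_hook_def nth_append less_Suc_eq)
  then show ?thesis
    unfolding hook_count_def by (simp add: card_Un_disjoint)
qed

lemma hook_count_eq_0:
  assumes "\<forall>x\<in>set xs. m \<le> x" "k < m"
  shows "hook_count k xs = 0"
proof -
  have "fc_hook xs s \<noteq> k" if "s < length xs" for s
    using assms that nth_mem[OF that] unfolding fc_hook_def by fastforce
  then show ?thesis unfolding hook_count_def by auto
qed

lemma hook_total_eq_0: "k < m \<Longrightarrow> hook_total k m n = 0"
  unfolding hook_total_def by (rule sum.neutral) (auto simp: partitions_ge_def intro: hook_count_eq_0)

lemma hook_total_rec:
  assumes "1 \<le> m" "m \<le> k"
  shows "hook_total k m n = (if k \<le> n then num_partitions_ge k (n - k) else 0)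
           + (\<Sum>a=m..<k. if a \<le> n then hook_total (k - 1) a (n - a) else 0)"
proof (cases "n = 0")
  case True
  then show ?thesis
    using assms by (simp add: hook_total_def partitions_ge_0 hook_count_def)
next
  case False
  have "hook_total k m n = (\<Sum>a=m..n. \<Sum>ys\<in>partitions_ge a (n - a). hook_count k (ys @ [a]))"
    using sum_partitions_ge_by_last[OF assms(1)] False unfolding hook_total_def by simp
  also have "\<dots> = (\<Sum>a=m..n. (if a = k then num_partitions_ge a (n - a) else 0)
                                         + hook_total (k - 1) a (n - a))"
    using assms
    by (intro sum.cong refl) (simp add: hook_total_def num_partitions_ge_def hook_count_snoc sum.distrib)
  also have "\<dots> = (\<Sum>a=m..n. if a = k then num_partitions_ge a (n - a) else 0)
                     + (\<Sum>a=m..n. hook_total (k - 1) a (n - a))"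
    by (rule sum.distrib)
  also have "(\<Sum>a=m..n. if a = k then num_partitions_ge a (n - a) else 0)
             = (if k \<le> n then num_partitions_ge k (n - k) else 0)"
    using assms by (simp add: sum.delta)
  also have "(\<Sum>a=m..n. hook_total (k - 1) a (n - a))
             = (\<Sum>a=m..<k. if a \<le> n then hook_total (k - 1) a (n - a) else 0)"
  proof -
    have "hook_total (k - 1) a (n - a) = 0" if "k \<le> a" for a
      using assms that by (intro hook_total_eq_0) simp
    then have "(\<Sum>a=m..n. hook_total (k - 1) a (n - a)) = (\<Sum>a\<in>{m..n} \<inter> {m..<k}. hook_total (k - 1) a (n - a))"
      by (intro sum.mono_neutral_right) (auto, metis not_le less_irrefl)
    also have "\<dots> = (\<Sum>a=m..<k. if a \<le> n then hook_total (k - 1) a (n - a) else 0)"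
    proof -
      have "{m..n} \<inter> {m..<k} = {a \<in> {m..<k}. a \<le> n}" by auto
      then show ?thesis by (simp only: sum.inter_filter[OF finite_atLeastLessThan])
    qed
    finally show ?thesis .
  qed
  finally show ?thesis .
qed

lemma d_count_eq_hook_total: "d_count k n = hook_total k 1 n"
  unfolding d_count_def hook_total_def hook_count_def partitions_ge_1 ..

fun qbinom :: "'a::comm_semiring_1 \<Rightarrow> nat \<Rightarrow> nat \<Rightarrow> 'a" where
  "qbinom q n 0 = 1"
| "qbinom q 0 (Suc r) = 0"
| "qbinom q (Suc n) (Suc r) = q ^ Suc r * qbinom q n (Suc r) + qbinom q n r"

lemma qbinom_eq_0: "n < r \<Longrightarrow> qbinom q n r = 0"
proof (induction n arbitrary: r)
  case 0
  then show ?case by (cases r) auto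
next
  case (Suc n)
  then show ?case by (cases r) auto
qed

lemma qbinom_diag: "qbinom q n n = 1"
  by (induction n) (auto simp: qbinom_eq_0)

lemma qbinom_Suc:
  "qbinom q (Suc n) r = q ^ r * qbinom q n r + (if r = 0 then 0 else qbinom q n (r - 1))"
  by (cases r) auto

lemma qpoch_fin_Suc: "qpoch_fin q (Suc n) = qpoch_fin q n * (1 - q ^ Suc n)"
  unfolding qpoch_fin_def by simp

lemma qbinom_mult_qpoch_fin:
  "r \<le> n \<Longrightarrow> qbinom q n r * qpoch_fin q r * qpoch_fin q (n - r) = qpoch_fin q n"
proof (induction n arbitrary: r)
  case 0
  then show ?case by (simp add: qpoch_fin_def)
next
  case (Suc n)
  show ?case
  proof (cases r)
    case 0
    then show ?thesis by (simp add: qpoch_fin_def)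
  next
    case (Suc r')
    have IH': "qbinom q n r' * qpoch_fin q r' * qpoch_fin q (n - r') = qpoch_fin q n"
      using Suc.IH Suc.prems Suc by simp
    show ?thesis
    proof (cases "r' = n")
      case True
      then show ?thesis
        using Suc by (simp add: qbinom_diag qpoch_fin_def)
    next
      case False
      then have "r = Suc r'" "Suc r' \<le> n" using Suc Suc.prems by auto
      then have IH: "qbinom q n (Suc r') * qpoch_fin q (Suc r') * qpoch_fin q (n - Suc r') = qpoch_fin q n"
        using Suc.IH by simp
      have split: "qpoch_fin q (n - r') = qpoch_fin q (n - Suc r') * (1 - q ^ (n - r'))"
        using \<open>Suc r' \<le> n\<close> qpoch_fin_Suc[of q "n - Suc r'"] by (simp add: Suc_diff_Suc)
      have pow: "q ^ Suc r' * q ^ (n - r') = q ^ Suc n"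
        using \<open>Suc r' \<le> n\<close> by (simp flip: power_add)
      have "qbinom q (Suc n) r * qpoch_fin q r * qpoch_fin q (Suc n - r)
          = q ^ Suc r' * (1 - q ^ (n - r')) * (qbinom q n (Suc r') * qpoch_fin q (Suc r') * qpoch_fin q (n - Suc r'))
            + (1 - q ^ Suc r') * (qbinom q n r' * qpoch_fin q r' * qpoch_fin q (n - r'))"
        using \<open>r = Suc r'\<close> by (simp add: split qpoch_fin_Suc algebra_simps)
      also have "\<dots> = qpoch_fin q n * (1 - q ^ Suc r' * q ^ (n - r'))"
        unfolding IH IH' by (simp add: algebra_simps)
      also have "\<dots> = qpoch_fin q n * (1 - q ^ Suc n)"
        by (simp only: pow)
      finally show ?thesis by (simp add: qpoch_fin_Suc)
    qed
  qed
qed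

(*
  In the generating function of hook_total k m, a row with first-column hook k and r rows
  below it has length k - r and contributes q^(k-r); the r rows below it (parts in
  [m, k-r]) contribute q^(m r) qbinom q (k-m) r, and the rows above it (parts at least
  k - r) contribute 1/(q^(k-r);q)_inf = (q;q)_(k-1-r)/(q;q)_inf. Factoring out
  q^k/(q;q)_inf leaves hook_poly q k m.
*)
definition hook_poly :: "complex \<Rightarrow> nat \<Rightarrow> nat \<Rightarrow> complex" where
  "hook_poly q k m = (\<Sum>r=0..k - m. q ^ ((m - 1) * r) * qbinom q (k - m) r * qpoch_fin q (k - 1 - r))"

lemma hook_poly_diag: "hook_poly q k k = qpoch_fin q (k - 1)"
  unfolding hook_poly_def by simp

lemma hook_poly_step:
  assumes "1 \<le> m" "m < k"
  shows "hook_poly q k m = hook_poly q k (Suc m) + q ^ (m - 1) * hook_poly q (k - 1) m"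
proof -
  define n where "n = k - Suc m"
  have n: "k - m = Suc n" "k - Suc m = n" "k - 1 - m = n" using assms by (auto simp: n_def)
  have "hook_poly q k m = (\<Sum>r=0..Suc n. q ^ (m * r) * qbinom q n r * qpoch_fin q (k - 1 - r))
      + (\<Sum>r=0..Suc n. q ^ ((m - 1) * r) * (if r = 0 then 0 else qbinom q n (r - 1)) * qpoch_fin q (k - 1 - r))"
  proof -
    have "q ^ ((m - 1) * r) * q ^ r = q ^ (m * r)" for r
      using assms by (simp flip: power_add add: algebra_simps)
    then show ?thesis
      unfolding hook_poly_def n(1) qbinom_Suc
      by (simp add: sum.distrib[symmetric] distrib_left distrib_right mult.assoc[symmetric])
  qed
  also have "(\<Sum>r=0..Suc n. q ^ (m * r) * qbinom q n r * qpoch_fin q (k - 1 - r)) = hook_poly q k (Suc m)"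
    unfolding hook_poly_def n(2) by (simp add: qbinom_eq_0)
  also have "(\<Sum>r=0..Suc n. q ^ ((m - 1) * r) * (if r = 0 then 0 else qbinom q n (r - 1)) * qpoch_fin q (k - 1 - r))
      = (\<Sum>r=0..n. q ^ ((m - 1) * Suc r) * qbinom q n r * qpoch_fin q (k - 1 - 1 - r))"
    by (subst sum.atLeast0_atMost_Suc_shift) simp
  also have "\<dots> = q ^ (m - 1) * hook_poly q (k - 1) m"
    unfolding hook_poly_def n(3) by (simp add: sum_distrib_left power_add mult_ac)
  finally show ?thesis .
qed

lemma hook_poly_telescope:
  assumes "1 \<le> m" "m \<le> k"
  shows "hook_poly q k m = qpoch_fin q (k - 1) + (\<Sum>a=m..<k. q ^ (a - 1) * hook_poly q (k - 1) a)"
  using assms(2,1)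
proof (induction m rule: inc_induct)
  case base
  then show ?case by (simp add: hook_poly_diag)
next
  case (step m)
  then show ?case
    by (simp add: hook_poly_step sum.atLeast_Suc_lessThan)
qed

lemma qpoch_fin_neq_0:
  assumes "norm q < 1"
  shows "qpoch_fin q n \<noteq> 0"
proof -
  have "norm (q ^ j) < 1" if "1 \<le> j" for j
    using assms that by (simp add: norm_power power_less_one_iff)
  then have "1 - q ^ j \<noteq> 0" if "1 \<le> j" for j
    using that by fastforce
  then show ?thesis unfolding qpoch_fin_def by simp
qed

lemma hook_poly_1:
  assumes "norm q < 1"
  shows "hook_poly q (Suc n) 1 = (\<Sum>r=0..n. qpoch_fin q n / qpoch_fin q r)"
proof -
  have "qbinom q n r * qpoch_fin q (n - r) = qpoch_fin q n / qpoch_fin q r" if "r \<le> n" for r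
    using qbinom_mult_qpoch_fin[OF that, of q] qpoch_fin_neq_0[OF assms, of r]
    by (simp add: eq_divide_eq mult_ac)
  then show ?thesis
    unfolding hook_poly_def by (auto intro!: sum.cong)
qed

lemma sum_num_partitions_ge_shift_le:
  fixes r :: real
  assumes "0 \<le> r"
  shows "(\<Sum>n\<le>M. (if m \<le> n then real (num_partitions_ge m (n - m)) else 0) * r ^ n)
         \<le> r ^ m * (\<Sum>n\<le>M. real (num_partitions_ge m n) * r ^ n)"
proof (cases "m \<le> M")
  case True
  have "(\<Sum>n\<le>M. (if m \<le> n then real (num_partitions_ge m (n - m)) else 0) * r ^ n)
        = (\<Sum>n\<in>{m..M}. real (num_partitions_ge m (n - m)) * r ^ n)"
    by (rule sum.mono_neutral_cong_right) auto
  also have "\<dots> = (\<Sum>i\<le>M - m. real (num_partitions_ge m i) * r ^ (i + m))"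
    using True by (intro sum.reindex_bij_witness[of _ "\<lambda>i. i + m" "\<lambda>n. n - m"]) auto
  also have "\<dots> = r ^ m * (\<Sum>i\<le>M - m. real (num_partitions_ge m i) * r ^ i)"
    by (simp add: sum_distrib_left power_add mult_ac)
  also have "\<dots> \<le> r ^ m * (\<Sum>n\<le>M. real (num_partitions_ge m n) * r ^ n)"
    using assms by (intro mult_left_mono sum_mono2) auto
  finally show ?thesis .
next
  case False
  then have "(\<Sum>n\<le>M. (if m \<le> n then real (num_partitions_ge m (n - m)) else 0) * r ^ n) = 0"
    by (intro sum.neutral) auto
  then show ?thesis
    using assms by (simp add: sum_nonneg)
qed

lemma sum_num_partitions_ge_le_prod:
  fixes r :: real
  assumes "0 \<le> r" "r < 1" "1 \<le> m" "m \<le> Suc M"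
  shows "(\<Sum>n\<le>M. real (num_partitions_ge m n) * r ^ n) \<le> (\<Prod>i=m..M. 1 / (1 - r ^ i))"
  using assms(4,3)
proof (induction m rule: inc_induct)
  case base
  have "(\<Sum>n\<le>M. real (num_partitions_ge (Suc M) n) * r ^ n) = (\<Sum>n\<le>M. if n = 0 then 1 else 0)"
    by (intro sum.cong refl) (auto simp: num_partitions_ge_0 num_partitions_ge_eq_0)
  then show ?case by simp
next
  case (step m)
  let ?S = "\<lambda>m. \<Sum>n\<le>M. real (num_partitions_ge m n) * r ^ n"
  have "?S m = ?S (Suc m) + (\<Sum>n\<le>M. (if m \<le> n then real (num_partitions_ge m (n - m)) else 0) * r ^ n)"
    by (subst num_partitions_ge_rec[OF step.prems]) (auto simp: sum.distrib algebra_simps intro!: sum.cong)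
  then have "?S m * (1 - r ^ m) \<le> ?S (Suc m)"
    using sum_num_partitions_ge_shift_le[OF assms(1), of m M] by (simp add: algebra_simps)
  also have "\<dots> \<le> (\<Prod>i=Suc m..M. 1 / (1 - r ^ i))"
    using step.IH step.prems by simp
  finally have "?S m \<le> (\<Prod>i=Suc m..M. 1 / (1 - r ^ i)) / (1 - r ^ m)"
    using assms(1,2) step.prems by (simp add: pos_le_divide_eq power_less_one_iff)
  also have "\<dots> = (\<Prod>i=m..M. 1 / (1 - r ^ i))"
    using step.hyps by (simp add: prod.atLeast_Suc_atMost)
  finally show ?case .
qed

lemma prod_inverse_one_minus_power_le:
  fixes r :: real
  assumes "0 \<le> r" "r < 1"
  shows "(\<Prod>i=1..M. 1 / (1 - r ^ i)) \<le> exp (1 / (1 - r) ^ 2)"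
proof -
  have "(\<Prod>i=1..M. 1 / (1 - r ^ i)) \<le> (\<Prod>i=1..M. exp (r ^ i / (1 - r)))"
  proof (rule prod_mono, safe)
    fix i :: nat assume i: "i \<in> {1..M}"
    have ri: "r ^ i \<le> r" "r ^ i < 1"
      using assms i power_decreasing[of 1 i r] by (auto simp: power_less_one_iff)
    then show "0 \<le> 1 / (1 - r ^ i)" by simp
    have "1 / (1 - r ^ i) = 1 + r ^ i / (1 - r ^ i)" using ri by (simp add: field_simps)
    also have "\<dots> \<le> 1 + r ^ i / (1 - r)"
      using ri assms by (intro add_left_mono divide_left_mono) auto
    also have "\<dots> \<le> exp (r ^ i / (1 - r))" by (rule exp_ge_add_one_self)
    finally show "1 / (1 - r ^ i) \<le> exp (r ^ i / (1 - r))" .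
  qed
  also have "\<dots> = exp ((\<Sum>i=1..M. r ^ i) / (1 - r))"
    by (simp add: exp_sum sum_divide_distrib)
  also have "\<dots> \<le> exp (1 / (1 - r) ^ 2)"
  proof -
    have "(\<Sum>i=1..M. r ^ i) \<le> (\<Sum>i<Suc M. r ^ i)"
      using assms by (intro sum_mono2) auto
    also have "\<dots> = (1 - r ^ Suc M) / (1 - r)"
      using assms by (simp only: sum_gp_strict) auto
    also have "\<dots> \<le> 1 / (1 - r)"
      using assms by (intro divide_right_mono) auto
    finally have "(\<Sum>i=1..M. r ^ i) / (1 - r) \<le> 1 / (1 - r) / (1 - r)"
      using assms by (intro divide_right_mono) auto
    then show ?thesis by (simp add: power2_eq_square)
  qed
  finally show ?thesis .
qed

lemma summable_card_partitions:
  fixes r :: real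
  assumes "0 \<le> r" "r < 1"
  shows "summable (\<lambda>n. real (card (partitions n)) * r ^ n)"
proof (rule summableI_nonneg_bounded)
  fix n
  have "(\<Sum>i<n. real (card (partitions i)) * r ^ i) \<le> (\<Sum>i\<le>n. real (card (partitions i)) * r ^ i)"
    using assms by (intro sum_mono2) auto
  also have "\<dots> = (\<Sum>i\<le>n. real (num_partitions_ge 1 i) * r ^ i)"
    unfolding num_partitions_ge_def partitions_ge_1 ..
  also have "\<dots> \<le> (\<Prod>i=1..n. 1 / (1 - r ^ i))"
    using sum_num_partitions_ge_le_prod[OF assms, of 1 n] by simp
  also have "\<dots> \<le> exp (1 / (1 - r) ^ 2)"
    by (rule prod_inverse_one_minus_power_le[OF assms])
  finally show "(\<Sum>i<n. real (card (partitions i)) * r ^ i) \<le> exp (1 / (1 - r) ^ 2)" .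
qed (use assms in simp)

lemma sums_shift_power:
  fixes q :: "'a::real_normed_field"
  assumes "(\<lambda>n. e n * q ^ n) sums E"
  shows "(\<lambda>n. (if a \<le> n then e (n - a) else 0) * q ^ n) sums (q ^ a * E)"
proof -
  have "(\<lambda>i. q ^ a * (e i * q ^ i)) sums (q ^ a * E)"
    by (rule sums_mult[OF assms])
  then have "(\<lambda>i. (if a \<le> i + a then e (i + a - a) else 0) * q ^ (i + a)) sums (q ^ a * E)"
    by (simp add: power_add mult_ac)
  then show ?thesis by (subst (asm) sums_zero_iff_shift) auto
qed

definition partition_gf :: "nat \<Rightarrow> complex \<Rightarrow> complex" where
  "partition_gf m q = (\<Sum>n. of_nat (num_partitions_ge m n) * q ^ n)"

context
  fixes q :: complex
  assumes q: "norm q < 1"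
begin

lemma summable_norm_partitions:
  "summable (\<lambda>n. real (card (partitions n)) * norm q ^ n)"
  using summable_card_partitions[of "norm q"] q by simp

lemma sums_partition_gf: "(\<lambda>n. of_nat (num_partitions_ge m n) * q ^ n) sums partition_gf m q"
proof -
  have "summable (\<lambda>n. norm (of_nat (num_partitions_ge m n) * q ^ n))"
  proof (rule summable_comparison_test'[OF summable_norm_partitions])
    fix n
    show "norm (norm (of_nat (num_partitions_ge m n) * q ^ n)) \<le> real (card (partitions n)) * norm q ^ n"
      using num_partitions_ge_le[of m n] by (simp add: norm_mult norm_power mult_right_mono)
  qed
  then show ?thesis
    unfolding partition_gf_def by (rule summable_sums[OF summable_norm_cancel])
qed

lemma partition_gf_Suc:
  assumes "1 \<le> m"
  shows "partition_gf (Suc m) q = partition_gf m q * (1 - q ^ m)"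
proof -
  have "(\<lambda>n. of_nat (num_partitions_ge (Suc m) n) * q ^ n
            + (if m \<le> n then of_nat (num_partitions_ge m (n - m)) else 0) * q ^ n)
        sums (partition_gf (Suc m) q + q ^ m * partition_gf m q)"
    by (intro sums_add sums_partition_gf sums_shift_power)
  also have "(\<lambda>n. of_nat (num_partitions_ge (Suc m) n) * q ^ n
            + (if m \<le> n then of_nat (num_partitions_ge m (n - m)) else 0) * q ^ n)
        = (\<lambda>n. of_nat (num_partitions_ge m n) * q ^ n)"
  proof
    fix n
    have "num_partitions_ge m n = num_partitions_ge (Suc m) n
            + (if m \<le> n then num_partitions_ge m (n - m) else 0)"
      by (rule num_partitions_ge_rec[OF assms])
    then show "of_nat (num_partitions_ge (Suc m) n) * q ^ n
            + (if m \<le> n then of_nat (num_partitions_ge m (n - m)) else 0) * q ^ n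
          = (of_nat (num_partitions_ge m n) :: complex) * q ^ n"
      by (simp add: algebra_simps)
  qed
  finally have "partition_gf m q = partition_gf (Suc m) q + q ^ m * partition_gf m q"
    by (rule sums_unique2[OF sums_partition_gf])
  then show ?thesis by (simp add: algebra_simps)
qed

lemma partition_gf_add:
  assumes "1 \<le> m"
  shows "partition_gf (m + L) q = partition_gf m q * (\<Prod>j<L. 1 - q ^ m * q ^ j)"
proof (induction L)
  case (Suc L)
  then show ?case
    using partition_gf_Suc[of "m + L"] assms by (simp add: power_add mult.assoc)
qed simp

lemma partition_gf_Suc_eq_qpoch_fin: "partition_gf (Suc L) q = partition_gf 1 q * qpoch_fin q L"
proof (induction L)
  case (Suc L)
  then show ?case
    using partition_gf_Suc[of "Suc L"] by (simp add: qpoch_fin_def mult.assoc)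
qed (simp add: qpoch_fin_def)

lemma partition_gf_tendsto_1: "(\<lambda>N. partition_gf N q) \<longlonglongrightarrow> 1"
proof -
  have "(\<lambda>N. \<Sum>n. of_nat (num_partitions_ge N n) * q ^ n) \<longlonglongrightarrow> (\<Sum>n. if n = 0 then 1 else 0 :: complex)"
  proof (rule tannerys_theorem[where M = "\<lambda>n. real (card (partitions n)) * norm q ^ n",
                               THEN conjunct2, THEN conjunct2])
    show "(\<lambda>N. of_nat (num_partitions_ge N n) * q ^ n) \<longlonglongrightarrow> (if n = 0 then 1 else 0)" for n
      by (rule tendsto_eventually, rule eventually_sequentiallyI[of "Suc n"])
        (auto simp: num_partitions_ge_0 num_partitions_ge_eq_0)
    show "\<forall>\<^sub>F (n, N) in sequentially \<times>\<^sub>F sequentially.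
            norm (of_nat (num_partitions_ge N n) * q ^ n) \<le> real (card (partitions n)) * norm q ^ n"
      by (intro always_eventually)
        (auto simp: norm_mult norm_power intro!: mult_right_mono num_partitions_ge_le)
  qed (use summable_norm_partitions in auto)
  moreover have "(\<lambda>n. if n = 0 then 1 else 0 :: complex) sums 1"
    using sums_single[of 0 "\<lambda>_. 1 :: complex"] by simp
  ultimately show ?thesis
    unfolding partition_gf_def by (simp add: sums_unique[symmetric])
qed

lemma qpoch_inf_LIMSEQ: "(\<lambda>L. \<Prod>j<L. 1 - a * q ^ j) \<longlonglongrightarrow> qpoch_inf a q"
proof -
  have "summable (\<lambda>j. norm ((1 - a * q ^ j) - 1))"
    using summable_mult[OF summable_geometric[of "norm q"], of "norm a"] q
    by (simp add: norm_mult norm_power)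
  then have "convergent_prod (\<lambda>j. 1 - a * q ^ j)"
    by (intro abs_convergent_prod_imp_convergent_prod summable_imp_abs_convergent_prod)
  then have "(\<lambda>L. \<Prod>j\<le>L. 1 - a * q ^ j) \<longlonglongrightarrow> qpoch_inf a q"
    unfolding qpoch_inf_def by (rule convergent_prod_LIMSEQ)
  then show ?thesis by (subst LIMSEQ_lessThan_iff_atMost)
qed

lemma partition_gf_eq_inverse_qpoch_inf:
  assumes "1 \<le> m"
  shows "partition_gf m q = 1 / qpoch_inf (q ^ m) q"
proof -
  have "(\<lambda>L. partition_gf (m + L) q) \<longlonglongrightarrow> partition_gf m q * qpoch_inf (q ^ m) q"
    unfolding partition_gf_add[OF assms] by (intro tendsto_mult tendsto_const qpoch_inf_LIMSEQ)
  moreover have "(\<lambda>L. partition_gf (m + L) q) \<longlonglongrightarrow> 1"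
    using LIMSEQ_ignore_initial_segment[OF partition_gf_tendsto_1, of m] by (simp add: add.commute)
  ultimately have "partition_gf m q * qpoch_inf (q ^ m) q = 1"
    by (rule LIMSEQ_unique)
  then show ?thesis by (auto simp: eq_divide_eq)
qed

end

lemma hook_total_series_rec:
  fixes q :: "'a::comm_semiring_1"
  assumes "1 \<le> m" "m \<le> k"
  shows "of_nat (hook_total k m n) * q ^ n
           = (if k \<le> n then of_nat (num_partitions_ge k (n - k)) else 0) * q ^ n
             + (\<Sum>a=m..<k. (if a \<le> n then of_nat (hook_total (k - 1) a (n - a)) else 0) * q ^ n)"
  unfolding hook_total_rec[OF assms] of_nat_add of_nat_sum if_distrib[of of_nat] of_nat_0
    distrib_right sum_distrib_right ..

lemma hook_poly_gf_rec:
  assumes q: "norm q < 1" and m: "1 \<le> m" "m \<le> Suc k"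
  shows "q ^ Suc k * partition_gf (Suc k) q
           + (\<Sum>a=m..<Suc k. q ^ a * (q ^ k * partition_gf 1 q * hook_poly q k a))
         = q ^ Suc k * partition_gf 1 q * hook_poly q (Suc k) m"
proof -
  have "q ^ a * (q ^ k * partition_gf 1 q * hook_poly q k a)
          = q ^ Suc k * partition_gf 1 q * (q ^ (a - 1) * hook_poly q k a)" if "1 \<le> a" for a
    using that by (cases a) (simp_all add: mult_ac)
  then have "(\<Sum>a=m..<Suc k. q ^ a * (q ^ k * partition_gf 1 q * hook_poly q k a))
          = (\<Sum>a=m..<Suc k. q ^ Suc k * partition_gf 1 q * (q ^ (a - 1) * hook_poly q k a))"
    using m by (intro sum.cong refl) simp
  also have "\<dots> = q ^ Suc k * partition_gf 1 q * (\<Sum>a=m..<Suc k. q ^ (a - 1) * hook_poly q k a)"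
    by (rule sum_distrib_left[symmetric])
  finally show ?thesis
    unfolding hook_poly_telescope[OF m] partition_gf_Suc_eq_qpoch_fin[OF q] diff_Suc_1
    by (simp add: distrib_left mult_ac)
qed

lemma hook_total_sums:
  assumes q: "norm q < 1" and "1 \<le> m" "m \<le> k"
  shows "(\<lambda>n. of_nat (hook_total k m n) * q ^ n) sums (q ^ k * partition_gf 1 q * hook_poly q k m)"
  using assms(2,3)
proof (induction k arbitrary: m)
  case (Suc k)
  have IH: "(\<lambda>n. of_nat (hook_total k a n) * q ^ n) sums (q ^ k * partition_gf 1 q * hook_poly q k a)"
    if "a \<in> {m..<Suc k}" for a
    using Suc.IH that Suc.prems by simp
  have "(\<lambda>n. of_nat (hook_total (Suc k) m n) * q ^ n)
        sums (q ^ Suc k * partition_gf (Suc k) q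
              + (\<Sum>a=m..<Suc k. q ^ a * (q ^ k * partition_gf 1 q * hook_poly q k a)))"
    unfolding hook_total_series_rec[OF Suc.prems] diff_Suc_1
    by (intro sums_add sums_sum sums_shift_power sums_partition_gf[OF q] IH)
  then show ?case
    unfolding hook_poly_gf_rec[OF q Suc.prems] .
qed simp

theorem theorem4p3:
  fixes k :: nat and q :: complex
  assumes "k \<ge> 1" and "norm q < 1"
  shows "(\<lambda>n. of_nat (d_count k n) * q ^ n) sums
           (q ^ k / qpoch_inf (q ^ k) q * (\<Sum>l=1..k. 1 / qpoch_fin q (k - l)))"
proof -
  obtain n where k: "k = Suc n" using assms(1) by (cases k) auto
  have "(\<lambda>n. of_nat (d_count k n) * q ^ n) sums (q ^ k * (partition_gf 1 q * hook_poly q k 1))"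
    using hook_total_sums[OF assms(2), of 1 k] assms(1) by (simp add: d_count_eq_hook_total mult.assoc)
  also have "partition_gf 1 q * hook_poly q k 1 = partition_gf k q * (\<Sum>r=0..n. 1 / qpoch_fin q r)"
    unfolding k hook_poly_1[OF assms(2)] partition_gf_Suc_eq_qpoch_fin[OF assms(2)]
    by (simp add: sum_distrib_left)
  also have "(\<Sum>r=0..n. 1 / qpoch_fin q r) = (\<Sum>l=1..k. 1 / qpoch_fin q (k - l))"
    by (rule sum.reindex_bij_witness[of _ "\<lambda>l. k - l" "\<lambda>r. k - r"]) (auto simp: k)
  finally show ?thesis
    using partition_gf_eq_inverse_qpoch_inf[OF assms(2,1)] by (simp add: mult.assoc)
qed

end
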